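(* Let $\rho$ be a combinatorial depth measure for hyperplanes in $\mathbb{R}^d$ satisfying conditions (i) and (ii) below. Then for every finite hyperplane arrangement $A$ and every $q\in\mathbb{R}^d$, $\rho(A,q)\le \mathrm{RD}(A,q)$. (i) For every arrangement $A$, every $q$ and every hyperplane $h$: $|\rho(A,q)-\rho(A\cup\{h\},q)|\le 1$. (ii) For every arrangement $A$: $\rho(A,q)=0$ whenever $q$ lies in an unbounded cell of $A$.
   Context: A hyperplane arrangement is a finite set of affine hyperplanes in $\mathbb{R}^d$. A depth measure for hyperplanes is a function $\rho$ assigning to each pair $(A,q)$ of a finite arrangement $A$ and a point $q\in\mathbb{R}^d$ a value in $\mathbb{R}_{\ge 0}$; it is combinatorial if, for each $A$, it is constant on each face of $A$ (the relatively open cells of all dimensions of the decomposition of $\mathbb{R}^d$ induced by $A$). Regression depth $\mathrm{RD}(A,q)$: the minimum, over all closed rays emanating from $q$, of the number of hyperplanes of $A$ intersected by or parallel to the ray. *)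

theory Defs
  imports "HOL-Analysis.Analysis"
begin

text \<open>Ambient space R^d is a Euclidean space type 'a (d = DIM('a)).
  A hyperplane is represented as its point set.\<close>

definition hyperplane :: "'a::euclidean_space set \<Rightarrow> bool" where
  "hyperplane h \<longleftrightarrow> (\<exists>a b. a \<noteq> 0 \<and> h = {x. a \<bullet> x = b})"

definition arrangement :: "'a::euclidean_space set set \<Rightarrow> bool" where
  "arrangement A \<longleftrightarrow> finite A \<and> (\<forall>h\<in>A. hyperplane h)"

text \<open>p and q have the same position relative to h: both on h, or on the same
  open side (the segment between them avoids h).\<close>
definition same_position :: "'a::euclidean_space set \<Rightarrow> 'a \<Rightarrow> 'a \<Rightarrow> bool" where
  "same_position h p q \<longleftrightarrow> (p \<in> h \<and> q \<in> h) \<or> closed_segment p q \<inter> h = {}"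

definition same_face :: "'a::euclidean_space set set \<Rightarrow> 'a \<Rightarrow> 'a \<Rightarrow> bool" where
  "same_face A p q \<longleftrightarrow> (\<forall>h\<in>A. same_position h p q)"

definition arr_face :: "'a::euclidean_space set set \<Rightarrow> 'a \<Rightarrow> 'a set" where
  "arr_face A q = {p. same_face A p q}"

definition depth_measure :: "('a::euclidean_space set set \<Rightarrow> 'a \<Rightarrow> real) \<Rightarrow> bool" where
  "depth_measure \<rho> \<longleftrightarrow> (\<forall>A q. arrangement A \<longrightarrow> \<rho> A q \<ge> 0)"

definition combinatorial :: "('a::euclidean_space set set \<Rightarrow> 'a \<Rightarrow> real) \<Rightarrow> bool" where
  "combinatorial \<rho> \<longleftrightarrow> (\<forall>A p q. arrangement A \<and> same_face A p q \<longrightarrow> \<rho> A p = \<rho> A q)"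

text \<open>q lies in an unbounded cell (full-dimensional face) of A.\<close>
definition in_unbounded_cell :: "'a::euclidean_space set set \<Rightarrow> 'a \<Rightarrow> bool" where
  "in_unbounded_cell A q \<longleftrightarrow> (\<forall>h\<in>A. q \<notin> h) \<and> \<not> bounded (arr_face A q)"

definition ray :: "'a::euclidean_space \<Rightarrow> 'a \<Rightarrow> 'a set" where
  "ray q v = {q + t *\<^sub>R v | t. t \<ge> 0}"

definition parallel_dir :: "'a::euclidean_space set \<Rightarrow> 'a \<Rightarrow> bool" where
  "parallel_dir h v \<longleftrightarrow> (\<forall>x\<in>h. x + v \<in> h)"

definition regression_depth :: "'a::euclidean_space set set \<Rightarrow> 'a \<Rightarrow> nat" where
  "regression_depth A q =
     Min {card {h\<in>A. ray q v \<inter> h \<noteq> {} \<or> parallel_dir h v} | v. v \<noteq> 0}"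

end

theory Submission
  imports Defs
begin

text \<open>Let v be a direction attaining the regression depth, and split A into the set B of
  hyperplanes met by (or parallel to) the ray from q in direction v and the rest C. The ray
  avoids every hyperplane of C, so it lies in the face of C containing q; hence that face is
  an unbounded cell and condition (ii) gives \<rho> C q = 0. Adding back the hyperplanes of B one
  at a time raises \<rho> by at most 1 each, by condition (i), so \<rho> A q \<le> card B, which is the
  regression depth.\<close>

lemma rho_union_hyperplanes_le:
  fixes \<rho> :: "'a::euclidean_space set set \<Rightarrow> 'a \<Rightarrow> real"
  assumes step: "\<And>A q h. arrangement A \<Longrightarrow> hyperplane h \<Longrightarrow> \<bar>\<rho> A q - \<rho> (insert h A) q\<bar> \<le> 1"
    and "finite B" "\<forall>h\<in>B. hyperplane h" "arrangement C"
  shows "\<rho> (B \<union> C) q \<le> \<rho> C q + real (card B)"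
  using assms(2-)
proof (induction B rule: finite_induct)
  case empty
  then show ?case by simp
next
  case (insert h B)
  have "arrangement (B \<union> C)"
    using insert by (auto simp: arrangement_def)
  then have "\<rho> (insert h (B \<union> C)) q \<le> \<rho> (B \<union> C) q + 1"
    using step[of "B \<union> C" h q] insert.prems by auto
  with insert show ?case by simp
qed

lemma regression_depth_attained:
  assumes "arrangement A"
  obtains v where "v \<noteq> 0"
    "regression_depth A q = card {h\<in>A. ray q v \<inter> h \<noteq> {} \<or> parallel_dir h v}"
proof -
  define S where "S = {card {h\<in>A. ray q v \<inter> h \<noteq> {} \<or> parallel_dir h v} | v::'a. v \<noteq> 0}"
  have "finite A"
    using assms by (simp add: arrangement_def)
  then have "S \<subseteq> {0..card A}"
    unfolding S_def by (auto intro!: card_mono)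
  then have "finite S"
    using finite_subset by blast
  obtain b :: 'a where "b \<in> Basis"
    using nonempty_Basis by blast
  then have "S \<noteq> {}"
    unfolding S_def using nonzero_Basis by blast
  with \<open>finite S\<close> have "Min S \<in> S"
    by (rule Min_in)
  then show thesis
    using that unfolding S_def regression_depth_def by auto
qed

lemma start_in_ray: "q \<in> ray q v"
  unfolding ray_def by (auto intro!: exI[of _ 0])

lemma closed_segment_subset_ray:
  assumes "p \<in> ray q v"
  shows "closed_segment p q \<subseteq> ray q v"
proof
  fix x
  assume "x \<in> closed_segment p q"
  then obtain u where u: "0 \<le> u" "u \<le> 1" "x = (1 - u) *\<^sub>R p + u *\<^sub>R q"
    by (auto simp: closed_segment_def)
  obtain t where t: "t \<ge> 0" "p = q + t *\<^sub>R v"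
    using assms unfolding ray_def by auto
  have "x = q + ((1 - u) * t) *\<^sub>R v"
    using u t by (simp add: algebra_simps)
  moreover have "(1 - u) * t \<ge> 0"
    using u t by simp
  ultimately show "x \<in> ray q v"
    unfolding ray_def by blast
qed

lemma unbounded_ray:
  assumes "v \<noteq> 0"
  shows "\<not> bounded (ray q v)"
proof
  assume "bounded (ray q v)"
  then obtain M where M: "\<And>x. x \<in> ray q v \<Longrightarrow> norm x \<le> M"
    by (auto simp: bounded_iff)
  define t where "t = (\<bar>M\<bar> + norm q + 1) / norm v"
  have "t \<ge> 0"
    unfolding t_def by simp
  then have "norm (q + t *\<^sub>R v) \<le> M"
    by (intro M) (auto simp: ray_def)
  moreover have "norm (t *\<^sub>R v) = \<bar>M\<bar> + norm q + 1"
    unfolding t_def using assms by simp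
  moreover have "norm (t *\<^sub>R v) \<le> norm (q + t *\<^sub>R v) + norm q"
    by (metis add_diff_cancel_left' norm_triangle_ineq4)
  ultimately show False
    by simp
qed

lemma ray_subset_arr_face:
  assumes "\<And>h. h \<in> C \<Longrightarrow> ray q v \<inter> h = {}"
  shows "ray q v \<subseteq> arr_face C q"
  unfolding arr_face_def same_face_def same_position_def
  using closed_segment_subset_ray assms by blast

lemma in_unbounded_cell_if_ray_avoids:
  assumes "v \<noteq> 0" and "\<And>h. h \<in> C \<Longrightarrow> ray q v \<inter> h = {}"
  shows "in_unbounded_cell C q"
proof -
  have "\<not> bounded (arr_face C q)"
    using ray_subset_arr_face[OF assms(2)] unbounded_ray[OF assms(1)] bounded_subset by blast
  moreover have "q \<notin> h" if "h \<in> C" for h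
    using assms(2)[OF that] start_in_ray by blast
  ultimately show ?thesis
    unfolding in_unbounded_cell_def by blast
qed

theorem lemma3p2:
  fixes \<rho> :: "'a::euclidean_space set set \<Rightarrow> 'a \<Rightarrow> real"
  assumes "depth_measure \<rho>"
    and "combinatorial \<rho>"
    and "\<And>A q h. arrangement A \<Longrightarrow> hyperplane h \<Longrightarrow> \<bar>\<rho> A q - \<rho> (insert h A) q\<bar> \<le> 1"
    and "\<And>A q. arrangement A \<Longrightarrow> in_unbounded_cell A q \<Longrightarrow> \<rho> A q = 0"
    and "arrangement A"
  shows "\<rho> A q \<le> real (regression_depth A q)"
proof -
  obtain v where "v \<noteq> 0"
    and depth: "regression_depth A q = card {h\<in>A. ray q v \<inter> h \<noteq> {} \<or> parallel_dir h v}"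
    using regression_depth_attained[OF assms(5)] .
  define B where "B = {h\<in>A. ray q v \<inter> h \<noteq> {} \<or> parallel_dir h v}"
  define C where "C = A - B"
  have "A = B \<union> C"
    unfolding B_def C_def by auto
  have "arrangement C" "finite B" "\<forall>h\<in>B. hyperplane h"
    using assms(5) unfolding B_def C_def arrangement_def by auto
  have "in_unbounded_cell C q"
    using \<open>v \<noteq> 0\<close> by (rule in_unbounded_cell_if_ray_avoids) (auto simp: B_def C_def)
  then have "\<rho> C q = 0"
    using assms(4) \<open>arrangement C\<close> by blast
  moreover have "\<rho> A q \<le> \<rho> C q + real (card B)"
    using rho_union_hyperplanes_le[of \<rho> B C q, OF assms(3) \<open>finite B\<close> \<open>\<forall>h\<in>B. hyperplane h\<close> \<open>arrangement C\<close>]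
      \<open>A = B \<union> C\<close> by simp
  ultimately show ?thesis
    using depth unfolding B_def by simp
qed

end
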